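(* Let $K$ be a finite group with trivial centre $Z(K)=1$, written additively as $(K,+)$. (1) Let $B$ be a skew left brace with additive group $(B,+)=K$ and multiplicative group $C=(B,\cdot)$. Then there exist subgroups $X$ and $Y$ of $\mathrm{Aut}(K)$ satisfying: (a) $XY = X\,\mathrm{Inn}(K) = Y\,\mathrm{Inn}(K)$; (b) there are subgroups $N, M \le \mathrm{Inn}(K)$ with $N \trianglelefteq X$ and $M \trianglelefteq Y$, and a group isomorphism $\gamma\colon Y/M \to X/N$ such that: whenever $x\in X$, $y\in Y$ satisfy $\gamma(yM)=xN$, we have $xy^{-1}\in \mathrm{Inn}(K)$; and for every $z\in \mathrm{Inn}(K)$ there exist $x\in X$, $y\in Y$ with $xN=\gamma(yM)$ and $xy^{-1}=z$; (c) $|K| = |X|\,|M| = |Y|\,|N|$; and moreover (d) $C$ has two normal subgroups $T$ and $V$ with $T\cap V=1$, $X\cong C/T$ and $Y\cong C/V$. (2) Conversely, if $X$ and $Y$ are subgroups of $\mathrm{Aut}(K)$ satisfying (a), (b), (c) (for some $N$, $M$, $\gamma$ as in (b)), then there exists a skew left brace $B$ with additive group $(B,+)=K$ whose multiplicative group $C=(B,\cdot)$ has two normal subgroups $T$, $V$ with $T\cap V=1$, $X\cong C/T$ and $Y\cong C/V$.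
   Context: A skew left brace is a set $B$ with two group structures $(B,+)$ (not necessarily abelian) and $(B,\cdot)$ such that $a(b+c) = ab - a + ac$ for all $a,b,c\in B$. Its additive group is $(B,+)$ and its multiplicative group is $(B,\cdot)$. $\mathrm{Inn}(K)$ denotes the group of inner automorphisms of $K$. Products of subgroups such as $XY$ denote the set $\{xy : x\in X, y\in Y\}$ inside $\mathrm{Aut}(K)$. *)

theory Defs
  imports "HOL-Algebra.Coset" "HOL-Algebra.Bij"
begin

definition grp_center :: "('a, 'b) monoid_scheme \<Rightarrow> 'a set" where
  "grp_center K = {z \<in> carrier K. \<forall>g \<in> carrier K. z \<otimes>\<^bsub>K\<^esub> g = g \<otimes>\<^bsub>K\<^esub> z}"

definition inn :: "('a, 'b) monoid_scheme \<Rightarrow> ('a \<Rightarrow> 'a) set" where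
  "inn K = (\<lambda>g. \<lambda>x \<in> carrier K. g \<otimes>\<^bsub>K\<^esub> x \<otimes>\<^bsub>K\<^esub> inv\<^bsub>K\<^esub> g) ` carrier K"

text \<open>C is the multiplicative group of a skew left brace whose additive group is K
  (the brace addition a + b is written a \<otimes>K b, and -a is inv K a).\<close>
definition skew_brace_mult :: "('a, 'b) monoid_scheme \<Rightarrow> 'a monoid \<Rightarrow> bool" where
  "skew_brace_mult K C \<longleftrightarrow> group C \<and> carrier C = carrier K \<and>
     (\<forall>a \<in> carrier K. \<forall>b \<in> carrier K. \<forall>c \<in> carrier K.
        a \<otimes>\<^bsub>C\<^esub> (b \<otimes>\<^bsub>K\<^esub> c)
          = (a \<otimes>\<^bsub>C\<^esub> b) \<otimes>\<^bsub>K\<^esub> inv\<^bsub>K\<^esub> a \<otimes>\<^bsub>K\<^esub> (a \<otimes>\<^bsub>C\<^esub> c))"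

definition aut_conditions ::
  "('a, 'b) monoid_scheme \<Rightarrow> ('a \<Rightarrow> 'a) set \<Rightarrow> ('a \<Rightarrow> 'a) set \<Rightarrow> ('a \<Rightarrow> 'a) set \<Rightarrow> ('a \<Rightarrow> 'a) set
     \<Rightarrow> (('a \<Rightarrow> 'a) set \<Rightarrow> ('a \<Rightarrow> 'a) set) \<Rightarrow> bool" where
  "aut_conditions K X Y N M \<gamma> \<longleftrightarrow>
     (
      \<comment> \<open>(a)\<close>
      set_mult (AutoGroup K) X (Y) = set_mult (AutoGroup K) X (inn K) \<and> set_mult (AutoGroup K) Y (inn K) = set_mult (AutoGroup K) X (Y) \<and>
      \<comment> \<open>(b)\<close>
      N \<subseteq> inn K \<and> M \<subseteq> inn K \<and>
      normal N ((AutoGroup K)\<lparr>carrier := X\<rparr>) \<and> normal M ((AutoGroup K)\<lparr>carrier := Y\<rparr>) \<and>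
      \<gamma> \<in> iso ((AutoGroup K)\<lparr>carrier := Y\<rparr> Mod M) ((AutoGroup K)\<lparr>carrier := X\<rparr> Mod N) \<and>
      (\<forall>x \<in> X. \<forall>y \<in> Y. \<gamma> (r_coset (AutoGroup K) M y) = r_coset (AutoGroup K) N x \<longrightarrow> monoid.mult (AutoGroup K) x (m_inv (AutoGroup K) y) \<in> inn K) \<and>
      (\<forall>z \<in> inn K. \<exists>x \<in> X. \<exists>y \<in> Y. r_coset (AutoGroup K) N x = \<gamma> (r_coset (AutoGroup K) M y) \<and> monoid.mult (AutoGroup K) x (m_inv (AutoGroup K) y) = z) \<and>
      \<comment> \<open>(c)\<close>
      card (carrier K) = card X * card M \<and> card (carrier K) = card Y * card N)"

end

theory Submission
  imports Defs
begin

text \<open>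
  Given a skew brace with multiplicative group \<open>C\<close>, the maps \<open>\<lambda>\<^sub>a(b) = -a + ab\<close> and
  \<open>\<rho>\<^sub>a(b) = ab - a = a + \<lambda>\<^sub>a(b) - a\<close> are homomorphisms \<open>C \<rightarrow> Aut(K)\<close>; take \<open>X = \<rho>(C)\<close>,
  \<open>Y = \<lambda>(C)\<close>, \<open>T = ker \<rho>\<close>, \<open>V = ker \<lambda>\<close>. Since \<open>\<rho>\<^sub>a \<lambda>\<^sub>a\<^sup>-\<^sup>1\<close> is conjugation by \<open>a\<close> and
  \<open>Z(K) = 1\<close>, \<open>T \<inter> V = 1\<close>; with \<open>N = \<rho>(V)\<close>, \<open>M = \<lambda>(T)\<close> the map \<open>\<gamma>(\<lambda>\<^sub>a M) = \<rho>\<^sub>a N\<close>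
  is the required isomorphism.

  Conversely, the graph \<open>{(y, x) \<in> Y \<times> X. xN = \<gamma>(yM)}\<close> of \<open>\<gamma>\<close> is closed under
  multiplication and has \<open>|Y| |N| = |K|\<close> elements, and \<open>(y, x) \<mapsto> xy\<^sup>-\<^sup>1\<close> maps it onto
  \<open>Inn(K) \<cong> K\<close>, hence bijectively. Writing \<open>(\<lambda>\<^sub>a, \<rho>\<^sub>a)\<close> for the pair mapped to
  conjugation by \<open>a\<close>, the multiplication \<open>a \<cdot> b = a + \<lambda>\<^sub>a(b)\<close> is a skew brace structure on \<open>K\<close>, and \<open>\<rho>\<close> and \<open>\<lambda>\<close>
  are the epimorphisms onto \<open>X\<close> and \<open>Y\<close>.
\<close>

lemma (in group) inv_mult_cancel_left [simp]:
  "g \<in> carrier G \<Longrightarrow> z \<in> carrier G \<Longrightarrow> inv g \<otimes> (g \<otimes> z) = z"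
  by (simp add: m_assoc[symmetric])

lemma (in group) mult_inv_cancel_left [simp]:
  "g \<in> carrier G \<Longrightarrow> z \<in> carrier G \<Longrightarrow> g \<otimes> (inv g \<otimes> z) = z"
  by (simp add: m_assoc[symmetric])

lemma (in group_hom) iso_FactGroup_kernel:
  assumes "h ` carrier G = carrier H"
  shows "H \<cong> G Mod kernel G H h"
  using group.iso_sym[OF normal.factorgroup_is_group[OF normal_kernel] FactGroup_iso[OF assms]] .

lemma (in group_hom) card_image_mult_card_kernel:
  assumes "h ` carrier G = carrier H"
  shows "card (carrier H) * card (kernel G H h) = card (carrier G)"
proof -
  have "card (rcosets kernel G H h) = card (carrier H)"
    using iso_same_card[OF FactGroup_iso[OF assms]] by (simp add: FactGroup_def)
  thus ?thesis using G.lagrange[OF subgroup_kernel] by (simp add: order_def)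
qed

lemma (in group_hom) inj_on_if_Int_kernel_trivial:
  assumes "subgroup S G" and "S \<inter> kernel G H h = {\<one>}"
  shows "inj_on h S"
  using assms subgroup.subset[OF assms(1)]
  by (auto simp: inj_on_subgroup_iff_trivial_ker[OF assms(1)] kernel_def)

section \<open>Automorphisms and inner automorphisms\<close>

locale aut_group = group K for K (structure)

sublocale aut_group \<subseteq> Aut: group "AutoGroup K" by (rule AutoGroup)

context aut_group
begin

abbreviation "A \<equiv> AutoGroup K"

definition inner :: "'a \<Rightarrow> 'a \<Rightarrow> 'a" where
  "inner g = (\<lambda>x \<in> carrier K. g \<otimes> x \<otimes> inv g)"

lemma inn_eq_image_inner: "inn K = inner ` carrier K"
  by (simp add: inn_def inner_def)

lemma AutoGroup_carrier [simp]: "carrier A = auto K"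
  by (simp add: AutoGroup_def)

lemma AutoGroup_mult_apply [simp]:
  "f \<in> auto K \<Longrightarrow> g \<in> auto K \<Longrightarrow> x \<in> carrier K \<Longrightarrow> (f \<otimes>\<^bsub>A\<^esub> g) x = f (g x)"
  by (simp add: AutoGroup_def BijGroup_def auto_def compose_def)

lemma AutoGroup_one_apply [simp]: "x \<in> carrier K \<Longrightarrow> \<one>\<^bsub>A\<^esub> x = x"
  by (simp add: AutoGroup_def BijGroup_def)

lemma auto_eqI: "f \<in> auto K \<Longrightarrow> g \<in> auto K \<Longrightarrow> (\<And>x. x \<in> carrier K \<Longrightarrow> f x = g x) \<Longrightarrow> f = g"
  by (auto simp: auto_def Bij_def intro: extensionalityI)

lemma auto_closed [simp]: "f \<in> auto K \<Longrightarrow> x \<in> carrier K \<Longrightarrow> f x \<in> carrier K"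
  unfolding auto_def by (blast intro: hom_in_carrier)

lemma auto_group_hom: "f \<in> auto K \<Longrightarrow> group_hom K K f"
  unfolding group_hom_def group_hom_axioms_def auto_def using is_group by blast

lemma auto_mult [simp]:
  "f \<in> auto K \<Longrightarrow> x \<in> carrier K \<Longrightarrow> y \<in> carrier K \<Longrightarrow> f (x \<otimes> y) = f x \<otimes> f y"
  unfolding auto_def by (blast intro: hom_mult)

lemma auto_one [simp]: "f \<in> auto K \<Longrightarrow> f \<one> = \<one>"
  by (drule auto_group_hom) (rule group_hom.hom_one)

lemma auto_inv [simp]: "f \<in> auto K \<Longrightarrow> x \<in> carrier K \<Longrightarrow> f (inv x) = inv (f x)"
  by (drule auto_group_hom) (rule group_hom.hom_inv)

lemma AutoGroup_inv_closed [simp]: "f \<in> auto K \<Longrightarrow> inv\<^bsub>A\<^esub> f \<in> auto K"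
  using Aut.inv_closed[of f] by simp

lemma AutoGroup_mult_closed [simp]: "f \<in> auto K \<Longrightarrow> g \<in> auto K \<Longrightarrow> f \<otimes>\<^bsub>A\<^esub> g \<in> auto K"
  using Aut.m_closed[of f g] by simp

lemma AutoGroup_one_closed [simp]: "\<one>\<^bsub>A\<^esub> \<in> auto K"
  using Aut.one_closed by simp

lemma auto_inv_apply [simp]: "f \<in> auto K \<Longrightarrow> x \<in> carrier K \<Longrightarrow> f ((inv\<^bsub>A\<^esub> f) x) = x"
  using AutoGroup_mult_apply[of f "inv\<^bsub>A\<^esub> f" x] Aut.r_inv[of f] by simp

lemma finite_auto: assumes "finite (carrier K)" shows "finite (auto K)"
proof (rule finite_subset)
  show "auto K \<subseteq> carrier K \<rightarrow>\<^sub>E carrier K"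
    by (auto simp: auto_def Bij_def PiE_def bij_betw_def)
  show "finite (carrier K \<rightarrow>\<^sub>E carrier K)" using assms by (intro finite_PiE) auto
qed

lemma inner_apply [simp]: "x \<in> carrier K \<Longrightarrow> inner g x = g \<otimes> x \<otimes> inv g"
  by (simp add: inner_def)

lemma inner_auto [simp]: "g \<in> carrier K \<Longrightarrow> inner g \<in> auto K"
proof -
  assume g: "g \<in> carrier K"
  have "bij_betw (inner g) (carrier K) (carrier K)"
    by (rule bij_betwI[where g="inner (inv g)"]) (use g in \<open>auto simp: m_assoc\<close>)
  moreover have "inner g \<in> hom K K"
    by (auto simp: hom_def g m_assoc)
  ultimately show ?thesis by (simp add: auto_def Bij_def inner_def)
qed

lemma inner_in_inn: "g \<in> carrier K \<Longrightarrow> inner g \<in> inn K"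
  by (simp add: inn_eq_image_inner)

lemma inner_mult: "g \<in> carrier K \<Longrightarrow> h \<in> carrier K \<Longrightarrow> inner (g \<otimes> h) = inner g \<otimes>\<^bsub>A\<^esub> inner h"
  by (rule auto_eqI) (simp_all add: m_assoc inv_mult_group)

lemma inner_one: "inner \<one> = \<one>\<^bsub>A\<^esub>"
  by (rule auto_eqI) simp_all

lemma inner_inv: "g \<in> carrier K \<Longrightarrow> inv\<^bsub>A\<^esub> (inner g) = inner (inv g)"
  using inner_mult[of "inv g" g] by (intro Aut.inv_equality) (simp_all add: inner_one)

lemma inner_eq_one_iff: "g \<in> carrier K \<Longrightarrow> inner g = \<one>\<^bsub>A\<^esub> \<longleftrightarrow> g \<in> grp_center K"
proof -
  assume g: "g \<in> carrier K"
  have "g \<otimes> x \<otimes> inv g = x \<longleftrightarrow> g \<otimes> x = x \<otimes> g" if "x \<in> carrier K" for x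
    using that g by (metis inv_solve_right' m_closed)
  hence "(\<forall>x\<in>carrier K. inner g x = \<one>\<^bsub>A\<^esub> x) \<longleftrightarrow> g \<in> grp_center K"
    using g by (simp add: grp_center_def)
  thus ?thesis using g by (metis auto_eqI inner_auto AutoGroup_one_closed)
qed

end

locale centerless_group = aut_group +
  assumes center_trivial: "grp_center K = {\<one>}"
begin

lemma inner_eq_one_imp: "g \<in> carrier K \<Longrightarrow> inner g = \<one>\<^bsub>A\<^esub> \<Longrightarrow> g = \<one>"
  using inner_eq_one_iff center_trivial by blast

lemma inj_on_inner: "inj_on inner (carrier K)"
proof (rule inj_onI)
  fix g h assume g: "g \<in> carrier K" and h: "h \<in> carrier K" and e: "inner g = inner h"
  have "inner (g \<otimes> inv h) = \<one>\<^bsub>A\<^esub>"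
    using g h e inner_mult[of h "inv h"] by (simp add: inner_mult inner_one)
  hence "g \<otimes> inv h = \<one>" using g h by (intro inner_eq_one_imp) simp_all
  thus "g = h" using g h by (simp add: inv_solve_right')
qed

end

section \<open>From a skew brace to subgroups of \<open>Aut(K)\<close>\<close>

locale skew_brace = aut_group K for K (structure) +
  fixes C :: "'a monoid"
  assumes skew_brace: "skew_brace_mult K C"
begin

lemma group_C: "group C" and carrier_C [simp]: "carrier C = carrier K"
  and brace_distrib: "\<And>a b c. a \<in> carrier K \<Longrightarrow> b \<in> carrier K \<Longrightarrow> c \<in> carrier K \<Longrightarrow>
        a \<otimes>\<^bsub>C\<^esub> (b \<otimes> c) = (a \<otimes>\<^bsub>C\<^esub> b) \<otimes> inv a \<otimes> (a \<otimes>\<^bsub>C\<^esub> c)"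
  using skew_brace unfolding skew_brace_mult_def by blast+

end

sublocale skew_brace \<subseteq> C: group C by (rule group_C)

context skew_brace
begin

lemma mult_C_closed [simp]: "a \<in> carrier K \<Longrightarrow> b \<in> carrier K \<Longrightarrow> a \<otimes>\<^bsub>C\<^esub> b \<in> carrier K"
  using C.m_closed by simp

lemma inv_C_closed [simp]: "a \<in> carrier K \<Longrightarrow> inv\<^bsub>C\<^esub> a \<in> carrier K"
  using C.inv_closed by simp

lemma one_C: "\<one>\<^bsub>C\<^esub> = \<one>"
proof -
  let ?e = "\<one>\<^bsub>C\<^esub>"
  have e: "?e \<in> carrier K" using C.one_closed by simp
  have "\<one> = \<one> \<otimes> inv ?e \<otimes> \<one>"
    using brace_distrib[OF e one_closed one_closed] C.l_one[of \<one>] by simp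
  thus ?thesis using e by (metis inv_closed inv_eq_1_iff l_one r_one)
qed

definition lam :: "'a \<Rightarrow> 'a \<Rightarrow> 'a" where
  "lam a = (\<lambda>b \<in> carrier K. inv a \<otimes> (a \<otimes>\<^bsub>C\<^esub> b))"

definition rho :: "'a \<Rightarrow> 'a \<Rightarrow> 'a" where
  "rho a = inner a \<otimes>\<^bsub>A\<^esub> lam a"

lemma lam_apply [simp]: "b \<in> carrier K \<Longrightarrow> lam a b = inv a \<otimes> (a \<otimes>\<^bsub>C\<^esub> b)"
  by (simp add: lam_def)

lemma mult_C_eq: "a \<in> carrier K \<Longrightarrow> b \<in> carrier K \<Longrightarrow> a \<otimes>\<^bsub>C\<^esub> b = a \<otimes> lam a b"
  by simp

lemma lam_auto [simp]: assumes a: "a \<in> carrier K" shows "lam a \<in> auto K"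
proof -
  have "bij_betw (lam a) (carrier K) (carrier K)"
    by (rule bij_betwI[where g="\<lambda>b. inv\<^bsub>C\<^esub> a \<otimes>\<^bsub>C\<^esub> (a \<otimes> b)"])
      (use a in \<open>auto simp: C.m_assoc[symmetric]\<close>)
  moreover have "lam a \<in> hom K K"
    using a by (auto simp: hom_def brace_distrib m_assoc)
  ultimately show ?thesis by (simp add: auto_def Bij_def lam_def)
qed

lemma rho_auto [simp]: "a \<in> carrier K \<Longrightarrow> rho a \<in> auto K"
  by (simp add: rho_def)

lemma lam_mult: assumes a: "a \<in> carrier K" and b: "b \<in> carrier K"
  shows "lam (a \<otimes>\<^bsub>C\<^esub> b) = lam a \<otimes>\<^bsub>A\<^esub> lam b"
proof (rule auto_eqI)
  fix c assume c: "c \<in> carrier K"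
  have "(lam a \<otimes>\<^bsub>A\<^esub> lam b) c = lam a (inv b \<otimes> (b \<otimes>\<^bsub>C\<^esub> c))" using a b c by simp
  also have "\<dots> = lam a (inv b) \<otimes> lam a (b \<otimes>\<^bsub>C\<^esub> c)" using a b c by (simp del: lam_apply)
  also have "\<dots> = inv (lam a b) \<otimes> (inv a \<otimes> (a \<otimes>\<^bsub>C\<^esub> (b \<otimes>\<^bsub>C\<^esub> c)))"
    using a b c by (simp del: lam_apply) simp
  also have "\<dots> = inv (a \<otimes> lam a b) \<otimes> ((a \<otimes>\<^bsub>C\<^esub> b) \<otimes>\<^bsub>C\<^esub> c)"
    using a b c by (simp del: lam_apply add: inv_mult_group m_assoc C.m_assoc)
  also have "\<dots> = lam (a \<otimes>\<^bsub>C\<^esub> b) c" using a b c by simp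
  finally show "lam (a \<otimes>\<^bsub>C\<^esub> b) c = (lam a \<otimes>\<^bsub>A\<^esub> lam b) c" by simp
qed (use a b in simp_all)

lemma rho_mult: assumes a: "a \<in> carrier K" and b: "b \<in> carrier K"
  shows "rho (a \<otimes>\<^bsub>C\<^esub> b) = rho a \<otimes>\<^bsub>A\<^esub> rho b"
proof -
  have "rho (a \<otimes>\<^bsub>C\<^esub> b) = inner (a \<otimes>\<^bsub>C\<^esub> b) \<otimes>\<^bsub>A\<^esub> (lam a \<otimes>\<^bsub>A\<^esub> lam b)"
    unfolding rho_def lam_mult[OF a b] ..
  also have "\<dots> = rho a \<otimes>\<^bsub>A\<^esub> rho b"
    unfolding rho_def mult_C_eq[OF a b] using a b
    by (intro auto_eqI) (simp_all del: lam_apply add: m_assoc inv_mult_group)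
  finally show ?thesis .
qed

lemma lam_hom: "group_hom C A lam"
  by (auto simp: group_hom_def group_hom_axioms_def group_C AutoGroup hom_def lam_mult)

lemma rho_hom: "group_hom C A rho"
  by (auto simp: group_hom_def group_hom_axioms_def group_C AutoGroup hom_def rho_mult)

lemma lam_one: "lam \<one> = \<one>\<^bsub>A\<^esub>"
  using group_hom.hom_one[OF lam_hom] by (simp add: one_C)

lemma rho_one: "rho \<one> = \<one>\<^bsub>A\<^esub>"
  using group_hom.hom_one[OF rho_hom] by (simp add: one_C)

lemma lam_inv: "a \<in> carrier K \<Longrightarrow> lam (inv\<^bsub>C\<^esub> a) = inv\<^bsub>A\<^esub> (lam a)"
  using group_hom.hom_inv[OF lam_hom] by simp

lemma rho_inv: "a \<in> carrier K \<Longrightarrow> rho (inv\<^bsub>C\<^esub> a) = inv\<^bsub>A\<^esub> (rho a)"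
  using group_hom.hom_inv[OF rho_hom] by simp

lemma rho_mult_inv_lam: "a \<in> carrier K \<Longrightarrow> rho a \<otimes>\<^bsub>A\<^esub> inv\<^bsub>A\<^esub> (lam a) = inner a"
  by (simp add: rho_def Aut.inv_solve_right')

definition "X_rho = rho ` carrier K"
definition "Y_lam = lam ` carrier K"
definition "ker_rho = {a \<in> carrier K. rho a = \<one>\<^bsub>A\<^esub>}"
definition "ker_lam = {a \<in> carrier K. lam a = \<one>\<^bsub>A\<^esub>}"
definition "N_rho = rho ` ker_lam"
definition "M_lam = lam ` ker_rho"

definition coset_map :: "('a \<Rightarrow> 'a) set \<Rightarrow> ('a \<Rightarrow> 'a) set" where
  "coset_map S = rho ` {c \<in> carrier K. lam c \<in> S}"

abbreviation "AX \<equiv> A\<lparr>carrier := X_rho\<rparr>"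
abbreviation "AY \<equiv> A\<lparr>carrier := Y_lam\<rparr>"

lemma subgroup_X_rho: "subgroup X_rho A"
  using group_hom.img_is_subgroup[OF rho_hom] by (simp add: X_rho_def)

lemma subgroup_Y_lam: "subgroup Y_lam A"
  using group_hom.img_is_subgroup[OF lam_hom] by (simp add: Y_lam_def)

lemma group_AX: "group AX" by (rule subgroup.subgroup_is_group[OF subgroup_X_rho Aut.is_group])
lemma group_AY: "group AY" by (rule subgroup.subgroup_is_group[OF subgroup_Y_lam Aut.is_group])

lemma rho_hom_X: "group_hom C AX rho"
  using group_C group_AX by (auto simp: group_hom_def group_hom_axioms_def hom_def X_rho_def rho_mult)

lemma lam_hom_Y: "group_hom C AY lam"
  using group_C group_AY by (auto simp: group_hom_def group_hom_axioms_def hom_def Y_lam_def lam_mult)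

lemma rho_onto_X: "rho ` carrier C = carrier AX" by (simp add: X_rho_def)
lemma lam_onto_Y: "lam ` carrier C = carrier AY" by (simp add: Y_lam_def)

lemma kernel_rho: "kernel C AX rho = ker_rho" by (simp add: kernel_def ker_rho_def)
lemma kernel_lam: "kernel C AY lam = ker_lam" by (simp add: kernel_def ker_lam_def)

lemma normal_ker_rho: "ker_rho \<lhd> C"
  using group_hom.normal_kernel[OF rho_hom_X] by (simp add: kernel_rho)

lemma normal_ker_lam: "ker_lam \<lhd> C"
  using group_hom.normal_kernel[OF lam_hom_Y] by (simp add: kernel_lam)

lemma ker_rho_subset: "ker_rho \<subseteq> carrier K" by (auto simp: ker_rho_def)
lemma ker_lam_subset: "ker_lam \<subseteq> carrier K" by (auto simp: ker_lam_def)

lemma normal_N_rho: "N_rho \<lhd> AX"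
  unfolding N_rho_def by (rule normal.surj_hom_normal_subgroup[OF normal_ker_lam rho_hom_X rho_onto_X])

lemma normal_M_lam: "M_lam \<lhd> AY"
  unfolding M_lam_def by (rule normal.surj_hom_normal_subgroup[OF normal_ker_rho lam_hom_Y lam_onto_Y])

lemma N_rho_subset_inn: "N_rho \<subseteq> inn K"
  by (auto simp: N_rho_def ker_lam_def inn_eq_image_inner rho_def)

lemma M_lam_subset_inn: "M_lam \<subseteq> inn K"
proof
  fix m assume "m \<in> M_lam"
  then obtain a where a: "a \<in> carrier K" "inner a \<otimes>\<^bsub>A\<^esub> lam a = \<one>\<^bsub>A\<^esub>" "m = lam a"
    by (auto simp: M_lam_def ker_rho_def rho_def)
  hence "m = inv\<^bsub>A\<^esub> (inner a)"
    by (metis Aut.inv_equality Aut.inv_inv AutoGroup_carrier inner_auto lam_auto)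
  hence "m = inner (inv a)" using a by (simp add: inner_inv)
  thus "m \<in> inn K" using a by (simp add: inner_in_inn)
qed

lemma mem_r_coset_A: "z \<in> r_coset A S g \<longleftrightarrow> (\<exists>h\<in>S. z = h \<otimes>\<^bsub>A\<^esub> g)"
  by (auto simp: r_coset_def)

lemma lam_eq_imp_ker_lam:
  "c \<in> carrier K \<Longrightarrow> d \<in> carrier K \<Longrightarrow> lam c = lam d \<Longrightarrow> c \<otimes>\<^bsub>C\<^esub> inv\<^bsub>C\<^esub> d \<in> ker_lam"
  by (simp add: ker_lam_def lam_mult lam_inv)

lemma rho_eq_imp_ker_rho:
  "c \<in> carrier K \<Longrightarrow> d \<in> carrier K \<Longrightarrow> rho c = rho d \<Longrightarrow> c \<otimes>\<^bsub>C\<^esub> inv\<^bsub>C\<^esub> d \<in> ker_rho"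
  by (simp add: ker_rho_def rho_mult rho_inv)

text \<open>\<open>\<gamma>\<close> is well defined: if \<open>\<lambda>\<^sub>c \<in> \<lambda>(T) \<lambda>\<^sub>a\<close> then \<open>c \<in> V T a\<close>, so \<open>\<rho>\<^sub>c \<in> \<rho>(V) \<rho>\<^sub>a = N \<rho>\<^sub>a\<close>.\<close>
lemma coset_map_r_coset: assumes a: "a \<in> carrier K"
  shows "coset_map (r_coset A M_lam (lam a)) = r_coset A N_rho (rho a)"
proof (intro equalityI subsetI)
  fix z assume "z \<in> coset_map (r_coset A M_lam (lam a))"
  then obtain c j where c: "c \<in> carrier K" "z = rho c" and j: "j \<in> ker_rho" "lam c = lam j \<otimes>\<^bsub>A\<^esub> lam a"
    by (auto simp: coset_map_def mem_r_coset_A M_lam_def)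
  have jc: "j \<in> carrier K" using j ker_rho_subset by blast
  let ?d = "j \<otimes>\<^bsub>C\<^esub> a"
  have d: "?d \<in> carrier K" using jc a by simp
  have "lam c = lam ?d" using j jc a by (simp add: lam_mult)
  hence i: "c \<otimes>\<^bsub>C\<^esub> inv\<^bsub>C\<^esub> ?d \<in> ker_lam" using lam_eq_imp_ker_lam c d by blast
  have "z = rho (c \<otimes>\<^bsub>C\<^esub> inv\<^bsub>C\<^esub> ?d) \<otimes>\<^bsub>A\<^esub> rho ?d"
    using c d by (simp flip: rho_mult add: C.m_assoc)
  also have "rho ?d = rho a" using j jc a by (simp add: rho_mult ker_rho_def)
  finally show "z \<in> r_coset A N_rho (rho a)" using i by (auto simp: mem_r_coset_A N_rho_def)
next
  fix z assume "z \<in> r_coset A N_rho (rho a)"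
  then obtain i where i: "i \<in> ker_lam" "z = rho i \<otimes>\<^bsub>A\<^esub> rho a" by (auto simp: mem_r_coset_A N_rho_def)
  have ic: "i \<in> carrier K" using i ker_lam_subset by blast
  have "lam (i \<otimes>\<^bsub>C\<^esub> a) = lam \<one> \<otimes>\<^bsub>A\<^esub> lam a"
    using i ic a by (simp add: lam_mult ker_lam_def lam_one)
  hence "lam (i \<otimes>\<^bsub>C\<^esub> a) \<in> r_coset A M_lam (lam a)"
    using one_C C.one_closed normal_ker_rho
    by (auto simp: mem_r_coset_A M_lam_def ker_rho_def rho_one)
  moreover have "z = rho (i \<otimes>\<^bsub>C\<^esub> a)" using i ic a by (simp add: rho_mult)
  ultimately show "z \<in> coset_map (r_coset A M_lam (lam a))" using ic a by (auto simp: coset_map_def)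
qed

lemma carrier_AY_Mod: "carrier (AY Mod M_lam) = (\<lambda>a. r_coset A M_lam (lam a)) ` carrier K"
  by (auto simp: carrier_FactGroup Y_lam_def)

lemma carrier_AX_Mod: "carrier (AX Mod N_rho) = (\<lambda>a. r_coset A N_rho (rho a)) ` carrier K"
  by (auto simp: carrier_FactGroup X_rho_def)

lemma coset_map_hom: "group_hom (AY Mod M_lam) (AX Mod N_rho) coset_map"
proof -
  have "coset_map \<in> hom (AY Mod M_lam) (AX Mod N_rho)"
  proof (rule homI)
    fix S assume "S \<in> carrier (AY Mod M_lam)"
    thus "coset_map S \<in> carrier (AX Mod N_rho)"
      using coset_map_r_coset carrier_AX_Mod carrier_AY_Mod by auto
  next
    fix S T assume "S \<in> carrier (AY Mod M_lam)" "T \<in> carrier (AY Mod M_lam)"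
    then obtain a b where a: "a \<in> carrier K" "S = r_coset A M_lam (lam a)"
      and b: "b \<in> carrier K" "T = r_coset A M_lam (lam b)" using carrier_AY_Mod by auto
    have "S \<otimes>\<^bsub>AY Mod M_lam\<^esub> T = r_coset A M_lam (lam (a \<otimes>\<^bsub>C\<^esub> b))"
      using normal.rcos_sum[OF normal_M_lam, of "lam a" "lam b"] a b
      by (simp add: Y_lam_def lam_mult)
    moreover have "coset_map S \<otimes>\<^bsub>AX Mod N_rho\<^esub> coset_map T = r_coset A N_rho (rho (a \<otimes>\<^bsub>C\<^esub> b))"
      using normal.rcos_sum[OF normal_N_rho, of "rho a" "rho b"] a b
      by (simp add: X_rho_def rho_mult coset_map_r_coset)
    ultimately show "coset_map (S \<otimes>\<^bsub>AY Mod M_lam\<^esub> T) = coset_map S \<otimes>\<^bsub>AX Mod N_rho\<^esub> coset_map T"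
      using a b coset_map_r_coset by simp
  qed
  thus ?thesis
    using normal.factorgroup_is_group[OF normal_M_lam] normal.factorgroup_is_group[OF normal_N_rho]
    by (simp add: group_hom_def group_hom_axioms_def)
qed

lemma coset_map_iso: "coset_map \<in> iso (AY Mod M_lam) (AX Mod N_rho)"
  unfolding group_hom.iso_iff[OF coset_map_hom]
proof (intro conjI ballI impI)
  show "carrier (AX Mod N_rho) \<subseteq> coset_map ` carrier (AY Mod M_lam)"
    using coset_map_r_coset carrier_AX_Mod carrier_AY_Mod by auto
next
  fix S assume "S \<in> carrier (AY Mod M_lam)" and e: "coset_map S = \<one>\<^bsub>AX Mod N_rho\<^esub>"
  then obtain a where a: "a \<in> carrier K" "S = r_coset A M_lam (lam a)" using carrier_AY_Mod by auto
  have "r_coset A N_rho (rho a) = N_rho" using e a coset_map_r_coset by simp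
  moreover have "rho a \<in> r_coset A N_rho (rho a)"
    using group.rcos_self[OF group_AX _ normal_imp_subgroup[OF normal_N_rho], of "rho a"] a
    by (simp add: X_rho_def)
  ultimately obtain i where i: "i \<in> ker_lam" "rho a = rho i" by (auto simp: N_rho_def)
  have ic: "i \<in> carrier K" using i ker_lam_subset by blast
  have "a \<otimes>\<^bsub>C\<^esub> inv\<^bsub>C\<^esub> i \<in> ker_rho" using rho_eq_imp_ker_rho a ic i by simp
  moreover have "lam (a \<otimes>\<^bsub>C\<^esub> inv\<^bsub>C\<^esub> i) = lam a"
    using a ic i by (simp add: lam_mult lam_inv ker_lam_def)
  ultimately have "lam a \<in> M_lam" unfolding M_lam_def by (metis image_eqI)
  hence "r_coset AY M_lam (lam a) = M_lam"
    using group.coset_join2[OF group_AY _ normal_imp_subgroup[OF normal_M_lam]] a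
    by (simp add: Y_lam_def)
  thus "S = \<one>\<^bsub>AY Mod M_lam\<^esub>" using a by simp
qed

lemma coset_map_eq_imp_inn:
  assumes x: "x \<in> X_rho" and y: "y \<in> Y_lam"
    and e: "coset_map (r_coset A M_lam y) = r_coset A N_rho x"
  shows "x \<otimes>\<^bsub>A\<^esub> inv\<^bsub>A\<^esub> y \<in> inn K"
proof -
  obtain a where a: "a \<in> carrier K" "y = lam a" using y by (auto simp: Y_lam_def)
  have "x \<in> r_coset A N_rho x"
    using group.rcos_self[OF group_AX _ normal_imp_subgroup[OF normal_N_rho], of x] x by simp
  hence "x \<in> r_coset A N_rho (rho a)" using e a coset_map_r_coset by simp
  then obtain i where i: "i \<in> ker_lam" "x = rho i \<otimes>\<^bsub>A\<^esub> rho a"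
    by (auto simp: mem_r_coset_A N_rho_def)
  have ic: "i \<in> carrier K" using i ker_lam_subset by blast
  have "x = rho (i \<otimes>\<^bsub>C\<^esub> a)" and "y = lam (i \<otimes>\<^bsub>C\<^esub> a)"
    using i ic a by (simp_all add: rho_mult lam_mult ker_lam_def)
  thus ?thesis using ic a by (simp add: rho_mult_inv_lam inner_in_inn)
qed

lemma inn_eq_coset_map_pair:
  assumes "z \<in> inn K"
  shows "\<exists>x \<in> X_rho. \<exists>y \<in> Y_lam. r_coset A N_rho x = coset_map (r_coset A M_lam y) \<and> x \<otimes>\<^bsub>A\<^esub> inv\<^bsub>A\<^esub> y = z"
proof -
  obtain k where k: "k \<in> carrier K" "z = inner k" using assms by (auto simp: inn_eq_image_inner)
  show ?thesis
    by (rule bexI[of _ "rho k"], rule bexI[of _ "lam k"])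
      (use k coset_map_r_coset rho_mult_inv_lam in \<open>auto simp: X_rho_def Y_lam_def\<close>)
qed

lemma lam_mult_C_eq: "a \<in> carrier K \<Longrightarrow> b \<in> carrier K \<Longrightarrow> lam (a \<otimes> lam a b) = lam a \<otimes>\<^bsub>A\<^esub> lam b"
  using lam_mult mult_C_eq by metis

lemmas aut_eval_simps = rho_def lam_mult_C_eq mult_C_eq lam_inv m_assoc inv_mult_group

lemma rho_mult_lam_eq_rho_mult_inner: "a \<in> carrier K \<Longrightarrow> b \<in> carrier K \<Longrightarrow>
   rho a \<otimes>\<^bsub>A\<^esub> lam b = rho (a \<otimes>\<^bsub>C\<^esub> b) \<otimes>\<^bsub>A\<^esub> inner ((inv\<^bsub>A\<^esub> (lam b)) (inv b))"
  by (intro auto_eqI) (simp_all del: lam_apply add: aut_eval_simps)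

lemma rho_mult_lam_eq_lam_mult_inner: "a \<in> carrier K \<Longrightarrow> b \<in> carrier K \<Longrightarrow>
   rho a \<otimes>\<^bsub>A\<^esub> lam b = lam (a \<otimes>\<^bsub>C\<^esub> b) \<otimes>\<^bsub>A\<^esub> inner ((inv\<^bsub>A\<^esub> (lam (a \<otimes>\<^bsub>C\<^esub> b))) a)"
  by (intro auto_eqI) (simp_all del: lam_apply add: aut_eval_simps)

lemma rho_mult_inner_eq: "a \<in> carrier K \<Longrightarrow> k \<in> carrier K \<Longrightarrow>
   rho a \<otimes>\<^bsub>A\<^esub> inner k = rho (a \<otimes>\<^bsub>C\<^esub> k) \<otimes>\<^bsub>A\<^esub> lam (inv\<^bsub>C\<^esub> k)"
  by (intro auto_eqI) (simp_all del: lam_apply add: aut_eval_simps)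

lemma lam_mult_inner_eq: assumes a: "a \<in> carrier K" and k: "k \<in> carrier K"
  shows "lam a \<otimes>\<^bsub>A\<^esub> inner k = rho (lam a k) \<otimes>\<^bsub>A\<^esub> lam (inv\<^bsub>C\<^esub> (lam a k) \<otimes>\<^bsub>C\<^esub> a)"
proof -
  have m: "lam a k \<in> carrier K" using a k by (simp del: lam_apply)
  have "lam (inv\<^bsub>C\<^esub> (lam a k) \<otimes>\<^bsub>C\<^esub> a) = inv\<^bsub>A\<^esub> (lam (lam a k)) \<otimes>\<^bsub>A\<^esub> lam a"
    using a m by (simp del: lam_apply add: lam_mult lam_inv)
  thus ?thesis using a k m
    by (intro auto_eqI) (simp_all del: lam_apply add: aut_eval_simps)
qed

lemma set_mult_X_Y_eq_X_inn: "set_mult A X_rho Y_lam = set_mult A X_rho (inn K)"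
proof
  show "set_mult A X_rho Y_lam \<subseteq> set_mult A X_rho (inn K)"
    by (force simp: set_mult_def X_rho_def Y_lam_def rho_mult_lam_eq_rho_mult_inner inner_in_inn
        simp del: lam_apply)
  show "set_mult A X_rho (inn K) \<subseteq> set_mult A X_rho Y_lam"
    by (force simp: set_mult_def X_rho_def Y_lam_def inn_eq_image_inner rho_mult_inner_eq)
qed

lemma set_mult_Y_inn_eq_X_Y: "set_mult A Y_lam (inn K) = set_mult A X_rho Y_lam"
proof
  show "set_mult A Y_lam (inn K) \<subseteq> set_mult A X_rho Y_lam"
    by (force simp: set_mult_def X_rho_def Y_lam_def inn_eq_image_inner lam_mult_inner_eq
        simp del: lam_apply)
  show "set_mult A X_rho Y_lam \<subseteq> set_mult A Y_lam (inn K)"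
    by (force simp: set_mult_def X_rho_def Y_lam_def rho_mult_lam_eq_lam_mult_inner inner_in_inn
        simp del: lam_apply)
qed

lemma card_X_rho: "card X_rho * card ker_rho = card (carrier K)"
  using group_hom.card_image_mult_card_kernel[OF rho_hom_X rho_onto_X] by (simp add: kernel_rho)

lemma card_Y_lam: "card Y_lam * card ker_lam = card (carrier K)"
  using group_hom.card_image_mult_card_kernel[OF lam_hom_Y lam_onto_Y] by (simp add: kernel_lam)

lemma ker_rho_Int_ker_lam:
  assumes "grp_center K = {\<one>}"
  shows "ker_rho \<inter> ker_lam = {\<one>\<^bsub>C\<^esub>}"
proof -
  have "a = \<one>" if "a \<in> carrier K" "rho a = \<one>\<^bsub>A\<^esub>" "lam a = \<one>\<^bsub>A\<^esub>" for a
    using that rho_mult_inv_lam[of a] inner_eq_one_iff[of a] assms by simp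
  thus ?thesis by (auto simp: ker_rho_def ker_lam_def one_C rho_one lam_one)
qed

lemma card_M_lam:
  assumes "grp_center K = {\<one>}"
  shows "card M_lam = card ker_rho"
proof -
  have "inj_on lam ker_rho"
    using group_hom.inj_on_if_Int_kernel_trivial[OF lam_hom_Y normal_imp_subgroup[OF normal_ker_rho]]
      ker_rho_Int_ker_lam[OF assms] by (simp add: kernel_lam)
  thus ?thesis by (simp add: M_lam_def card_image)
qed

lemma card_N_rho:
  assumes "grp_center K = {\<one>}"
  shows "card N_rho = card ker_lam"
proof -
  have "inj_on rho ker_lam"
    using group_hom.inj_on_if_Int_kernel_trivial[OF rho_hom_X normal_imp_subgroup[OF normal_ker_lam]]
      ker_rho_Int_ker_lam[OF assms] by (simp add: kernel_rho Int_commute)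
  thus ?thesis by (simp add: N_rho_def card_image)
qed

lemma aut_conditions_brace:
  assumes "grp_center K = {\<one>}"
  shows "aut_conditions K X_rho Y_lam N_rho M_lam coset_map"
  unfolding aut_conditions_def
  using set_mult_X_Y_eq_X_inn set_mult_Y_inn_eq_X_Y N_rho_subset_inn M_lam_subset_inn
    normal_N_rho normal_M_lam coset_map_iso coset_map_eq_imp_inn inn_eq_coset_map_pair
    card_X_rho card_Y_lam card_M_lam[OF assms] card_N_rho[OF assms]
  by (simp add: mult.commute)

lemma brace_aut_subgroups:
  assumes "grp_center K = {\<one>}"
  shows "\<exists>X Y. subgroup X A \<and> subgroup Y A \<and> (\<exists>N M \<gamma>. aut_conditions K X Y N M \<gamma>) \<and>
           (\<exists>T V. T \<lhd> C \<and> V \<lhd> C \<and> T \<inter> V = {\<one>\<^bsub>C\<^esub>} \<and>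
              A\<lparr>carrier := X\<rparr> \<cong> C Mod T \<and> A\<lparr>carrier := Y\<rparr> \<cong> C Mod V)"
  using subgroup_X_rho subgroup_Y_lam aut_conditions_brace[OF assms]
    normal_ker_rho normal_ker_lam ker_rho_Int_ker_lam[OF assms]
    group_hom.iso_FactGroup_kernel[OF rho_hom_X rho_onto_X]
    group_hom.iso_FactGroup_kernel[OF lam_hom_Y lam_onto_Y]
  unfolding kernel_rho kernel_lam by blast

end

section \<open>From subgroups of \<open>Aut(K)\<close> to a skew brace\<close>

locale aut_pair = centerless_group +
  fixes X Y N M :: "('a \<Rightarrow> 'a) set" and \<gamma> :: "('a \<Rightarrow> 'a) set \<Rightarrow> ('a \<Rightarrow> 'a) set"
  assumes finite_K: "finite (carrier K)"
    and subgroup_X: "subgroup X (AutoGroup K)" and subgroup_Y: "subgroup Y (AutoGroup K)"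
    and conditions: "aut_conditions K X Y N M \<gamma>"
begin

abbreviation "AX \<equiv> A\<lparr>carrier := X\<rparr>"
abbreviation "AY \<equiv> A\<lparr>carrier := Y\<rparr>"

lemma group_AX: "group AX" by (rule subgroup.subgroup_is_group[OF subgroup_X Aut.is_group])
lemma group_AY: "group AY" by (rule subgroup.subgroup_is_group[OF subgroup_Y Aut.is_group])

lemma normal_N: "N \<lhd> AX" and normal_M: "M \<lhd> AY"
  and gamma_iso: "\<gamma> \<in> iso (AY Mod M) (AX Mod N)"
  and gamma_eq_imp_inn: "\<And>x y. x \<in> X \<Longrightarrow> y \<in> Y \<Longrightarrow> \<gamma> (r_coset A M y) = r_coset A N x \<Longrightarrow>
      x \<otimes>\<^bsub>A\<^esub> inv\<^bsub>A\<^esub> y \<in> inn K"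
  and inn_eq_gamma_pair: "\<And>z. z \<in> inn K \<Longrightarrow>
      \<exists>x \<in> X. \<exists>y \<in> Y. r_coset A N x = \<gamma> (r_coset A M y) \<and> x \<otimes>\<^bsub>A\<^esub> inv\<^bsub>A\<^esub> y = z"
  and card_K_eq: "card (carrier K) = card Y * card N"
  using conditions unfolding aut_conditions_def by blast+

lemma X_subset: "X \<subseteq> auto K" using subgroup.subset[OF subgroup_X] by simp
lemma Y_subset: "Y \<subseteq> auto K" using subgroup.subset[OF subgroup_Y] by simp

lemma subgroup_N: "subgroup N AX" by (rule normal_imp_subgroup[OF normal_N])
lemma subgroup_M: "subgroup M AY" by (rule normal_imp_subgroup[OF normal_M])
lemma N_subset: "N \<subseteq> X" using subgroup.subset[OF subgroup_N] by simp
lemma M_subset: "M \<subseteq> Y" using subgroup.subset[OF subgroup_M] by simp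

lemma gamma_hom: "group_hom (AY Mod M) (AX Mod N) \<gamma>"
  using gamma_iso normal.factorgroup_is_group[OF normal_M] normal.factorgroup_is_group[OF normal_N]
  by (simp add: group_hom_def group_hom_axioms_def iso_def)

lemma carrier_AY_Mod: "carrier (AY Mod M) = (\<lambda>y. r_coset A M y) ` Y"
  by (simp add: carrier_FactGroup)

lemma carrier_AX_Mod: "carrier (AX Mod N) = (\<lambda>x. r_coset A N x) ` X"
  by (simp add: carrier_FactGroup)

lemma gamma_r_coset: "y \<in> Y \<Longrightarrow> \<exists>x\<in>X. \<gamma> (r_coset A M y) = r_coset A N x"
proof -
  assume "y \<in> Y"
  hence "\<gamma> (r_coset A M y) \<in> carrier (AX Mod N)"
    using gamma_iso carrier_AY_Mod by (auto simp: iso_def hom_def)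
  thus ?thesis using carrier_AX_Mod by auto
qed

lemma r_coset_eq_gamma: "x \<in> X \<Longrightarrow> \<exists>y\<in>Y. \<gamma> (r_coset A M y) = r_coset A N x"
proof -
  assume "x \<in> X"
  hence "r_coset A N x \<in> \<gamma> ` carrier (AY Mod M)"
    using gamma_iso carrier_AX_Mod by (auto simp: iso_def bij_betw_def)
  thus ?thesis using carrier_AY_Mod by auto
qed

lemma mem_r_coset_N_iff: "x \<in> X \<Longrightarrow> x0 \<in> X \<Longrightarrow> x \<in> r_coset A N x0 \<longleftrightarrow> r_coset A N x = r_coset A N x0"
  using group.repr_independence[OF group_AX, of x N x0] group.rcos_self[OF group_AX, of x N] subgroup_N
  by auto

lemma r_coset_N_subset: "x0 \<in> X \<Longrightarrow> r_coset A N x0 \<subseteq> X"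
  using monoid.r_coset_subset_G[OF group.is_monoid[OF group_AX], of N x0] N_subset by simp

lemma card_r_coset_N: "x0 \<in> X \<Longrightarrow> card (r_coset A N x0) = card N"
proof -
  assume "x0 \<in> X"
  hence "r_coset A N x0 \<in> rcosets\<^bsub>AX\<^esub> N" by (auto simp: RCOSETS_def)
  thus ?thesis using group.card_rcosets_equal[OF group_AX, of "r_coset A N x0" N] N_subset by simp
qed

definition gamma_graph :: "(('a \<Rightarrow> 'a) \<times> ('a \<Rightarrow> 'a)) set" where
  "gamma_graph = {(y, x). y \<in> Y \<and> x \<in> X \<and> r_coset A N x = \<gamma> (r_coset A M y)}"

lemma gamma_graph_Sigma: "gamma_graph = Sigma Y (\<lambda>y. \<gamma> (r_coset A M y))"
proof -
  have "(y, x) \<in> gamma_graph \<longleftrightarrow> y \<in> Y \<and> x \<in> \<gamma> (r_coset A M y)" for x y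
  proof (cases "y \<in> Y")
    case True
    then obtain x0 where "x0 \<in> X" "\<gamma> (r_coset A M y) = r_coset A N x0" using gamma_r_coset by blast
    thus ?thesis using r_coset_N_subset mem_r_coset_N_iff[of x x0] True
      by (auto simp: gamma_graph_def)
  qed (auto simp: gamma_graph_def)
  thus ?thesis by auto
qed

lemma finite_X: "finite X" using X_subset finite_auto[OF finite_K] finite_subset by blast
lemma finite_Y: "finite Y" using Y_subset finite_auto[OF finite_K] finite_subset by blast

lemma finite_gamma_graph: "finite gamma_graph"
  unfolding gamma_graph_Sigma
  using finite_X finite_Y r_coset_N_subset gamma_r_coset by (metis finite_SigmaI finite_subset)

lemma card_gamma_graph: "card gamma_graph = card (carrier K)"
proof -
  have "card gamma_graph = (\<Sum>y\<in>Y. card (\<gamma> (r_coset A M y)))"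
    unfolding gamma_graph_Sigma
    by (rule card_SigmaI[OF finite_Y])
      (use finite_X r_coset_N_subset gamma_r_coset in \<open>metis finite_subset\<close>)
  also have "\<dots> = (\<Sum>y\<in>Y. card N)"
    by (rule sum.cong) (auto dest!: gamma_r_coset simp: card_r_coset_N)
  finally show ?thesis using card_K_eq by (simp add: mult.commute)
qed

lemma gamma_graph_mult:
  assumes p1: "(y1, x1) \<in> gamma_graph" and p2: "(y2, x2) \<in> gamma_graph"
  shows "(y1 \<otimes>\<^bsub>A\<^esub> y2, x1 \<otimes>\<^bsub>A\<^esub> x2) \<in> gamma_graph"
proof -
  have y: "y1 \<in> Y" "y2 \<in> Y" and x: "x1 \<in> X" "x2 \<in> X"
    and e1: "r_coset A N x1 = \<gamma> (r_coset A M y1)" and e2: "r_coset A N x2 = \<gamma> (r_coset A M y2)"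
    using p1 p2 by (auto simp: gamma_graph_def)
  have "\<gamma> (r_coset A M (y1 \<otimes>\<^bsub>A\<^esub> y2)) = set_mult A (\<gamma> (r_coset A M y1)) (\<gamma> (r_coset A M y2))"
    using normal.rcos_sum[OF normal_M, of y1 y2] y
      group_hom.hom_mult[OF gamma_hom, of "r_coset A M y1" "r_coset A M y2"] carrier_AY_Mod
    by simp
  also have "\<dots> = r_coset A N (x1 \<otimes>\<^bsub>A\<^esub> x2)"
    using normal.rcos_sum[OF normal_N, of x1 x2] x by (simp add: e1 e2)
  finally show ?thesis
    using subgroup.m_closed[OF subgroup_X] subgroup.m_closed[OF subgroup_Y] x y
    by (simp add: gamma_graph_def)
qed

lemma one_gamma_graph: "(\<one>\<^bsub>A\<^esub>, \<one>\<^bsub>A\<^esub>) \<in> gamma_graph"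
proof -
  have "r_coset A M \<one>\<^bsub>A\<^esub> = M" "r_coset A N \<one>\<^bsub>A\<^esub> = N"
    using Aut.coset_mult_one M_subset N_subset X_subset Y_subset by auto
  moreover have "\<gamma> M = N" using group_hom.hom_one[OF gamma_hom] by simp
  ultimately show ?thesis
    using subgroup.one_closed[OF subgroup_X] subgroup.one_closed[OF subgroup_Y]
    by (simp add: gamma_graph_def)
qed

definition graph_elem :: "('a \<Rightarrow> 'a) \<times> ('a \<Rightarrow> 'a) \<Rightarrow> 'a" where
  "graph_elem p = inv_into (carrier K) inner (snd p \<otimes>\<^bsub>A\<^esub> inv\<^bsub>A\<^esub> fst p)"

lemma graph_elem_eq: "k \<in> carrier K \<Longrightarrow> x \<otimes>\<^bsub>A\<^esub> inv\<^bsub>A\<^esub> y = inner k \<Longrightarrow> graph_elem (y, x) = k"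
  by (simp add: graph_elem_def inv_into_f_f[OF inj_on_inner])

lemma gamma_graph_inn: "(y, x) \<in> gamma_graph \<Longrightarrow> \<exists>k\<in>carrier K. x \<otimes>\<^bsub>A\<^esub> inv\<^bsub>A\<^esub> y = inner k"
  using gamma_eq_imp_inn[of x y] by (auto simp: gamma_graph_def inn_eq_image_inner)

lemma graph_elem_image: "graph_elem ` gamma_graph = carrier K"
proof
  show "graph_elem ` gamma_graph \<subseteq> carrier K"
    using gamma_graph_inn graph_elem_eq by force
  show "carrier K \<subseteq> graph_elem ` gamma_graph"
  proof
    fix k assume k: "k \<in> carrier K"
    then obtain x y where "x \<in> X" "y \<in> Y" "r_coset A N x = \<gamma> (r_coset A M y)"
      and "x \<otimes>\<^bsub>A\<^esub> inv\<^bsub>A\<^esub> y = inner k"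
      using inn_eq_gamma_pair[of "inner k"] by (auto simp: inner_in_inn)
    hence "(y, x) \<in> gamma_graph" "graph_elem (y, x) = k" using graph_elem_eq[OF k] by (auto simp: gamma_graph_def)
    thus "k \<in> graph_elem ` gamma_graph" by (metis image_eqI)
  qed
qed

text \<open>Surjective between finite sets of equal size, by condition (c).\<close>
lemma inj_on_graph_elem: "inj_on graph_elem gamma_graph"
  by (rule eq_card_imp_inj_on[OF finite_gamma_graph]) (simp add: graph_elem_image card_gamma_graph)

definition graph_pair :: "'a \<Rightarrow> ('a \<Rightarrow> 'a) \<times> ('a \<Rightarrow> 'a)" where
  "graph_pair k = inv_into gamma_graph graph_elem k"

definition "lam k = fst (graph_pair k)"
definition "rho k = snd (graph_pair k)"

lemma graph_pair_in: "k \<in> carrier K \<Longrightarrow> graph_pair k \<in> gamma_graph"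
  unfolding graph_pair_def by (rule inv_into_into) (simp add: graph_elem_image)

lemma graph_pair_eqI:
  "(y, x) \<in> gamma_graph \<Longrightarrow> k \<in> carrier K \<Longrightarrow> x \<otimes>\<^bsub>A\<^esub> inv\<^bsub>A\<^esub> y = inner k \<Longrightarrow> graph_pair k = (y, x)"
  unfolding graph_pair_def using graph_elem_eq inv_into_f_f[OF inj_on_graph_elem] by metis

lemma graph_pair_eq: "k \<in> carrier K \<Longrightarrow> graph_pair k = (lam k, rho k)"
  by (simp add: lam_def rho_def)

lemma lam_in_Y: "k \<in> carrier K \<Longrightarrow> lam k \<in> Y"
  using graph_pair_in graph_pair_eq by (fastforce simp: gamma_graph_def)

lemma rho_in_X: "k \<in> carrier K \<Longrightarrow> rho k \<in> X"
  using graph_pair_in graph_pair_eq by (fastforce simp: gamma_graph_def)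

lemma lam_auto [simp]: "k \<in> carrier K \<Longrightarrow> lam k \<in> auto K" using lam_in_Y Y_subset by blast
lemma rho_auto [simp]: "k \<in> carrier K \<Longrightarrow> rho k \<in> auto K" using rho_in_X X_subset by blast

lemma rho_mult_inv_lam: "k \<in> carrier K \<Longrightarrow> rho k \<otimes>\<^bsub>A\<^esub> inv\<^bsub>A\<^esub> lam k = inner k"
proof -
  assume k: "k \<in> carrier K"
  obtain k' where k': "k' \<in> carrier K" "rho k \<otimes>\<^bsub>A\<^esub> inv\<^bsub>A\<^esub> lam k = inner k'"
    using gamma_graph_inn graph_pair_in[OF k] by (metis graph_pair_eq[OF k])
  have "graph_elem (graph_pair k) = k'" using graph_elem_eq[OF k'] by (simp add: graph_pair_eq[OF k])
  moreover have "graph_elem (graph_pair k) = k"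
    unfolding graph_pair_def by (rule f_inv_into_f) (simp add: graph_elem_image k)
  ultimately show ?thesis using k' by simp
qed

lemma rho_eq: "k \<in> carrier K \<Longrightarrow> rho k = inner k \<otimes>\<^bsub>A\<^esub> lam k"
  using rho_mult_inv_lam[of k] by (simp add: Aut.inv_solve_right')

lemma graph_pair_mult:
  assumes a: "a \<in> carrier K" and b: "b \<in> carrier K"
  shows "graph_pair (a \<otimes> lam a b) = (lam a \<otimes>\<^bsub>A\<^esub> lam b, rho a \<otimes>\<^bsub>A\<^esub> rho b)"
proof (rule graph_pair_eqI)
  show "(lam a \<otimes>\<^bsub>A\<^esub> lam b, rho a \<otimes>\<^bsub>A\<^esub> rho b) \<in> gamma_graph"
    using gamma_graph_mult graph_pair_in[OF a] graph_pair_in[OF b] by (simp add: graph_pair_eq a b)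
  show c: "a \<otimes> lam a b \<in> carrier K" using a b by simp
  have "rho a \<otimes>\<^bsub>A\<^esub> rho b = inner (a \<otimes> lam a b) \<otimes>\<^bsub>A\<^esub> (lam a \<otimes>\<^bsub>A\<^esub> lam b)"
    by (rule auto_eqI) (simp_all add: a b rho_eq m_assoc inv_mult_group)
  thus "rho a \<otimes>\<^bsub>A\<^esub> rho b \<otimes>\<^bsub>A\<^esub> inv\<^bsub>A\<^esub> (lam a \<otimes>\<^bsub>A\<^esub> lam b) = inner (a \<otimes> lam a b)"
    using a b c by (simp add: Aut.inv_solve_right')
qed

lemma lam_mult: "a \<in> carrier K \<Longrightarrow> b \<in> carrier K \<Longrightarrow> lam (a \<otimes> lam a b) = lam a \<otimes>\<^bsub>A\<^esub> lam b"
  using graph_pair_mult by (simp add: lam_def)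

lemma rho_mult: "a \<in> carrier K \<Longrightarrow> b \<in> carrier K \<Longrightarrow> rho (a \<otimes> lam a b) = rho a \<otimes>\<^bsub>A\<^esub> rho b"
  using graph_pair_mult by (simp add: rho_def)

lemma graph_pair_one: "graph_pair \<one> = (\<one>\<^bsub>A\<^esub>, \<one>\<^bsub>A\<^esub>)"
  by (rule graph_pair_eqI[OF one_gamma_graph]) (simp_all add: inner_one)

lemma lam_one: "lam \<one> = \<one>\<^bsub>A\<^esub>" and rho_one: "rho \<one> = \<one>\<^bsub>A\<^esub>"
  using graph_pair_one by (simp_all add: lam_def rho_def)

definition brace_mult :: "'a \<Rightarrow> 'a \<Rightarrow> 'a" where
  "brace_mult a b = a \<otimes> lam a b"

definition brace_group :: "'a monoid" where
  "brace_group = \<lparr>carrier = carrier K, mult = brace_mult, one = \<one>\<rparr>"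

lemma brace_mult_closed: "a \<in> carrier K \<Longrightarrow> b \<in> carrier K \<Longrightarrow> brace_mult a b \<in> carrier K"
  by (simp add: brace_mult_def)

lemma brace_mult_assoc:
  "a \<in> carrier K \<Longrightarrow> b \<in> carrier K \<Longrightarrow> c \<in> carrier K \<Longrightarrow>
    brace_mult (brace_mult a b) c = brace_mult a (brace_mult b c)"
  by (simp add: brace_mult_def lam_mult m_assoc)

lemma brace_one_mult: "a \<in> carrier K \<Longrightarrow> brace_mult \<one> a = a"
  by (simp add: brace_mult_def lam_one)

lemma brace_mult_one: "a \<in> carrier K \<Longrightarrow> brace_mult a \<one> = a"
  by (simp add: brace_mult_def)

definition brace_inv :: "'a \<Rightarrow> 'a" where
  "brace_inv a = (inv\<^bsub>A\<^esub> (lam a)) (inv a)"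

lemma brace_inv_closed: "a \<in> carrier K \<Longrightarrow> brace_inv a \<in> carrier K"
  by (simp add: brace_inv_def)

lemma brace_mult_inv: "a \<in> carrier K \<Longrightarrow> brace_mult a (brace_inv a) = \<one>"
  by (simp add: brace_inv_def brace_mult_def)

text \<open>A right inverse in a monoid is also a left inverse once every element has one.\<close>
lemma brace_inv_mult: assumes a: "a \<in> carrier K" shows "brace_mult (brace_inv a) a = \<one>"
proof -
  let ?r = "brace_inv a" let ?rr = "brace_inv (brace_inv a)"
  have r: "?r \<in> carrier K" and rr: "?rr \<in> carrier K" using a by (simp_all add: brace_inv_closed)
  have "brace_mult ?r a = brace_mult (brace_mult ?r a) (brace_mult ?r ?rr)"
    using brace_mult_inv[OF r] brace_mult_one a r by (simp add: brace_mult_closed)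
  also have "\<dots> = brace_mult ?r (brace_mult (brace_mult a ?r) ?rr)"
    using a r rr by (simp add: brace_mult_assoc brace_mult_closed)
  also have "\<dots> = \<one>" using a r rr by (simp add: brace_mult_inv brace_one_mult)
  finally show ?thesis .
qed

lemma group_brace_group: "group brace_group"
  unfolding brace_group_def
  by (rule groupI)
    (auto simp: brace_mult_closed brace_mult_assoc brace_one_mult
      intro!: bexI[of _ "brace_inv _"] brace_inv_mult brace_inv_closed)

lemma skew_brace_mult_brace_group: "skew_brace_mult K brace_group"
  unfolding skew_brace_mult_def using group_brace_group
  by (simp add: brace_group_def brace_mult_def m_assoc)

lemma rho_hom: "group_hom brace_group AX rho"
  using group_brace_group group_AX
  by (auto simp: group_hom_def group_hom_axioms_def hom_def brace_group_def brace_mult_def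
      rho_in_X rho_mult)

lemma lam_hom: "group_hom brace_group AY lam"
  using group_brace_group group_AY
  by (auto simp: group_hom_def group_hom_axioms_def hom_def brace_group_def brace_mult_def
      lam_in_Y lam_mult)

lemma graph_pair_onto: "(y, x) \<in> gamma_graph \<Longrightarrow> \<exists>k\<in>carrier K. lam k = y \<and> rho k = x"
  using gamma_graph_inn graph_pair_eqI by (metis graph_pair_eq prod.inject)

lemma lam_onto: "lam ` carrier brace_group = carrier AY"
proof (intro equalityI subsetI)
  fix y assume "y \<in> carrier AY"
  then obtain x where "(y, x) \<in> gamma_graph"
    using gamma_r_coset by (fastforce simp: gamma_graph_def)
  thus "y \<in> lam ` carrier brace_group"
    using graph_pair_onto by (fastforce simp: brace_group_def)
qed (auto simp: brace_group_def lam_in_Y)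

lemma rho_onto: "rho ` carrier brace_group = carrier AX"
proof (intro equalityI subsetI)
  fix x assume "x \<in> carrier AX"
  then obtain y where "(y, x) \<in> gamma_graph"
    using r_coset_eq_gamma by (fastforce simp: gamma_graph_def)
  thus "x \<in> rho ` carrier brace_group"
    using graph_pair_onto by (fastforce simp: brace_group_def)
qed (auto simp: brace_group_def rho_in_X)

lemma kernel_rho_Int_kernel_lam:
  "kernel brace_group AX rho \<inter> kernel brace_group AY lam = {\<one>\<^bsub>brace_group\<^esub>}"
proof -
  have "a = \<one>" if "a \<in> carrier K" "rho a = \<one>\<^bsub>A\<^esub>" "lam a = \<one>\<^bsub>A\<^esub>" for a
    using that rho_eq[of a] inner_eq_one_imp[of a] by simp
  thus ?thesis by (auto simp: kernel_def brace_group_def lam_one rho_one)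
qed

lemma brace_of_aut_subgroups:
  "\<exists>C :: 'a monoid. skew_brace_mult K C \<and>
     (\<exists>T V. T \<lhd> C \<and> V \<lhd> C \<and> T \<inter> V = {\<one>\<^bsub>C\<^esub>} \<and> AX \<cong> C Mod T \<and> AY \<cong> C Mod V)"
  using skew_brace_mult_brace_group group_hom.normal_kernel[OF rho_hom]
    group_hom.normal_kernel[OF lam_hom] kernel_rho_Int_kernel_lam
    group_hom.iso_FactGroup_kernel[OF rho_hom rho_onto]
    group_hom.iso_FactGroup_kernel[OF lam_hom lam_onto]
  by blast

end

theorem theoremA:
  fixes K :: "('a, 'b) monoid_scheme"
  assumes "group K" and "finite (carrier K)" and "grp_center K = {\<one>\<^bsub>K\<^esub>}"
  shows "(\<forall>C :: 'a monoid. skew_brace_mult K C \<longrightarrow>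
            (\<exists>X Y. subgroup X (AutoGroup K) \<and> subgroup Y (AutoGroup K) \<and>
               (\<exists>N M \<gamma>. aut_conditions K X Y N M \<gamma>) \<and>
               (\<exists>T V. normal T C \<and> normal V C \<and> T \<inter> V = {\<one>\<^bsub>C\<^esub>} \<and>
                  (AutoGroup K)\<lparr>carrier := X\<rparr> \<cong> C Mod T \<and>
                  (AutoGroup K)\<lparr>carrier := Y\<rparr> \<cong> C Mod V)))
       \<and>
         (\<forall>X Y N M \<gamma>. subgroup X (AutoGroup K) \<and> subgroup Y (AutoGroup K) \<and>
              aut_conditions K X Y N M \<gamma> \<longrightarrow>
            (\<exists>C :: 'a monoid. skew_brace_mult K C \<and>
               (\<exists>T V. normal T C \<and> normal V C \<and> T \<inter> V = {\<one>\<^bsub>C\<^esub>} \<and>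
                  (AutoGroup K)\<lparr>carrier := X\<rparr> \<cong> C Mod T \<and>
                  (AutoGroup K)\<lparr>carrier := Y\<rparr> \<cong> C Mod V)))"
proof -
  have "skew_brace K C" if "skew_brace_mult K C" for C :: "'a monoid"
    using assms(1) that by (simp add: skew_brace_def skew_brace_axioms_def aut_group_def)
  moreover have "aut_pair K X Y N M \<gamma>"
    if "subgroup X (AutoGroup K) \<and> subgroup Y (AutoGroup K) \<and> aut_conditions K X Y N M \<gamma>"
    for X Y N M \<gamma>
    using assms that by (simp add: aut_pair_def aut_pair_axioms_def centerless_group_def
        centerless_group_axioms_def aut_group_def)
  ultimately show ?thesis
    using skew_brace.brace_aut_subgroups[OF _ assms(3)] aut_pair.brace_of_aut_subgroups by blast
qed

end
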